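(* Let $f$ be a non-degenerate $C^2$ function on $\mathbb R$ and let $F$ be a $C^1$ function on $\mathbb R$ with $\lim_{x\to-\infty}F(x)=-1$ and $\lim_{x\to+\infty}F(x)=1$. Let $a<b$ with $f(a)f(b)\neq0$. Then $$\mathcal H^0(\{f=0\}\cap[a,b])=\frac12\Big[F\Big(\frac{f'}{f}(b)\Big)-F\Big(\frac{f'}{f}(a)\Big)-\int_a^bF'\Big(\frac{f'(x)}{f(x)}\Big)\Big(\frac{f'(x)}{f(x)}\Big)'dx\Big].$$ In particular, if $a$ and $b$ are points of local extrema of $f$ (so $f'(a)=f'(b)=0$), then $$\mathcal H^0(\{f=0\}\cap[a,b])=-\frac12\int_a^bF'\Big(\frac{f'(x)}{f(x)}\Big)\Big(\frac{f'(x)}{f(x)}\Big)'dx.$$ Here the integrand is defined where $f(x)\neq0$ and the integral is the sum of the (improper) integrals over the finitely many open intervals of $[a,b]$ between consecutive zeros of $f$.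
   Context: $\mathcal H^0(\{f=0\}\cap[a,b])$ is the number of zeros of $f$ in $[a,b]$. A $C^1$ function $f$ on $\mathbb R$ is non-degenerate if there is no $x$ with $f(x)=f'(x)=0$ (equivalently $\sqrt{f^2+f'^2}$ has positive minimum on every compact set). *)

theory Defs
  imports "HOL-Analysis.Analysis"
begin

definition has_improper_integral_open :: "(real \<Rightarrow> real) \<Rightarrow> real \<Rightarrow> real \<Rightarrow> real \<Rightarrow> bool" where
  "has_improper_integral_open g c d I \<longleftrightarrow>
     (\<forall>s t. c < s \<and> s \<le> t \<and> t < d \<longrightarrow> g integrable_on {s..t}) \<and>
     ((\<lambda>p. integral {fst p..snd p} g) \<longlongrightarrow> I) (at_right c \<times>\<^sub>F at_left d)"

definition zero_partition :: "(real \<Rightarrow> real) \<Rightarrow> real \<Rightarrow> real \<Rightarrow> real list" where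
  "zero_partition f a b = sorted_list_of_set ({a, b} \<union> {x \<in> {a..b}. f x = 0})"

end

theory Submission
  imports Defs "HOL-Real_Asymp.Real_Asymp"
begin

text \<open>On an open interval between consecutive points of the partition, the integrand is the
  derivative of \<open>F \<circ> (f'/f)\<close>, so its improper integral is the difference of the one-sided
  limits of \<open>F \<circ> (f'/f)\<close> at the endpoints. Near a zero \<open>c\<close> of \<open>f\<close> we have
  \<open>f'/f \<sim> 1/(x - c)\<close> because \<open>f'(c) \<noteq> 0\<close>, so \<open>F \<circ> (f'/f)\<close> tends to \<open>1\<close> from the right and to
  \<open>-1\<close> from the left, while at \<open>a\<close> and \<open>b\<close> it is continuous. Summing over the intervals,
  every zero contributes \<open>-2\<close>.\<close>

lemma sorted_wrt_less_nth_between_notin: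
  fixes xs :: "'a::linorder list"
  assumes "sorted_wrt (<) xs" "Suc i < length xs" "xs ! i < x" "x < xs ! Suc i"
  shows "x \<notin> set xs"
proof
  assume "x \<in> set xs"
  then obtain j where j: "j < length xs" "xs ! j = x"
    by (auto simp: in_set_conv_nth)
  have "sorted xs" using assms(1) by (rule strict_sorted_imp_sorted)
  then have "x \<le> xs ! i \<or> xs ! Suc i \<le> x"
    using j assms(2) sorted_nth_mono[of xs j i] sorted_nth_mono[of xs "Suc i" j]
    by (cases "j \<le> i") auto
  with assms(3,4) show False by auto
qed

lemma sorted_list_of_set_with_endpoints:
  fixes Z :: "'a::linorder set"
  assumes "finite Z" "Z \<subseteq> {a<..<b}" "a < b"
  defines "ps \<equiv> sorted_list_of_set ({a, b} \<union> Z)"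
  shows "length ps = card Z + 2"
    and "ps ! 0 = a"
    and "ps ! (card Z + 1) = b"
    and "\<And>i. 0 < i \<Longrightarrow> i \<le> card Z \<Longrightarrow> ps ! i \<in> Z"
    and "\<And>i. i \<le> card Z \<Longrightarrow> ps ! i < ps ! Suc i"
    and "\<And>i. i \<le> card Z \<Longrightarrow> {ps ! i <..< ps ! Suc i} \<subseteq> {a<..<b} - Z"
proof -
  have fin: "finite ({a, b} \<union> Z)" using assms(1) by simp
  have set_ps: "set ps = {a, b} \<union> Z" unfolding ps_def using fin by (rule set_sorted_list_of_set)
  have sorted: "sorted_wrt (<) ps" unfolding ps_def by (rule strict_sorted_list_of_set)
  have a_Z: "a \<notin> Z" and b_Z: "b \<notin> Z" using assms(2) by auto
  have "length ps = card ({a, b} \<union> Z)" unfolding ps_def by (rule length_sorted_list_of_set)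
  then show len: "length ps = card Z + 2" using assms a_Z b_Z by (simp add: card_insert_if)
  have "{a, b} \<union> Z \<subseteq> {a..b}" using assms(2,3) by (auto simp: subset_iff less_imp_le)
  then have in_ab: "ps ! i \<in> {a..b}" if "i < length ps" for i
    using nth_mem[OF that] set_ps by blast
  have mono: "ps ! i < ps ! j" if "i < j" "j < length ps" for i j
    using sorted that sorted_wrt_nth_less by blast
  show first: "ps ! 0 = a"
  proof -
    have "a \<in> set ps" using set_ps by simp
    then obtain j where "j < length ps" "ps ! j = a" by (auto simp: in_set_conv_nth)
    then show ?thesis using mono[of 0 j] in_ab[of 0] len by (cases j) auto
  qed
  show last: "ps ! (card Z + 1) = b"
  proof -
    have "b \<in> set ps" using set_ps by simp
    then obtain j where "j < length ps" "ps ! j = b" by (auto simp: in_set_conv_nth)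
    then show ?thesis
      using mono[of j "card Z + 1"] in_ab[of "card Z + 1"] len by (cases "j = card Z + 1") auto
  qed
  show "ps ! i \<in> Z" if "0 < i" "i \<le> card Z" for i
    using nth_mem[of i ps] set_ps mono[of 0 i] mono[of i "card Z + 1"] that len first last by auto
  show "ps ! i < ps ! Suc i" if "i \<le> card Z" for i
    using mono that len by simp
  show "{ps ! i <..< ps ! Suc i} \<subseteq> {a<..<b} - Z" if "i \<le> card Z" for i
  proof
    fix x assume "x \<in> {ps ! i <..< ps ! Suc i}"
    then have x: "ps ! i < x" "x < ps ! Suc i" by simp_all
    have i: "Suc i < length ps" using that len by simp
    have "x \<notin> Z"
      using sorted_wrt_less_nth_between_notin[OF sorted i x] set_ps by blast
    have "a \<le> ps ! i" "ps ! Suc i \<le> b"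
      using in_ab[OF Suc_lessD[OF i]] in_ab[OF i] by simp_all
    then have "a < x" "x < b" using x by (auto intro: le_less_trans less_le_trans)
    with \<open>x \<notin> Z\<close> show "x \<in> {a<..<b} - Z" by simp
  qed
qed

lemma zero_partition_nth:
  fixes f :: "real \<Rightarrow> real"
  assumes "finite {x \<in> {a..b}. f x = 0}" "a < b" "f a \<noteq> 0" "f b \<noteq> 0"
  defines "n \<equiv> card {x \<in> {a..b}. f x = 0}" and "ps \<equiv> zero_partition f a b"
  shows "length ps = n + 2" and "ps ! 0 = a" and "ps ! (n + 1) = b"
    and "\<And>i. 0 < i \<Longrightarrow> i \<le> n \<Longrightarrow> f (ps ! i) = 0"
    and "\<And>i. i \<le> n \<Longrightarrow> ps ! i < ps ! Suc i"
    and "\<And>i x. i \<le> n \<Longrightarrow> ps ! i < x \<Longrightarrow> x < ps ! Suc i \<Longrightarrow> f x \<noteq> 0"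
proof -
  have "{x \<in> {a..b}. f x = 0} \<subseteq> {a<..<b}"
    using assms(3,4) by (auto simp: less_le)
  note partition = sorted_list_of_set_with_endpoints[OF assms(1) this assms(2),
      folded zero_partition_def, folded n_def ps_def]
  show "length ps = n + 2" "ps ! 0 = a" "ps ! (n + 1) = b" "\<And>i. i \<le> n \<Longrightarrow> ps ! i < ps ! Suc i"
    by (fact partition(1,2,3,5))+
  show "f (ps ! i) = 0" if "0 < i" "i \<le> n" for i
    using partition(4)[OF that] by simp
  show "f x \<noteq> 0" if "i \<le> n" "ps ! i < x" "x < ps ! Suc i" for i x
    using partition(6)[OF that(1)] that(2,3) by fastforce
qed

lemma sum_lessThan_telescope_interior_jumps:
  fixes l r :: "nat \<Rightarrow> real"
  assumes "\<And>i. 0 < i \<Longrightarrow> i \<le> n \<Longrightarrow> r i = -1 \<and> l i = 1"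
  shows "(\<Sum>i<Suc n. r (Suc i) - l i) = r (Suc n) - l 0 - 2 * real n"
  using assms
proof (induction n)
  case (Suc n)
  then have "(\<Sum>i<Suc n. r (Suc i) - l i) = r (Suc n) - l 0 - 2 * real n"
    by simp
  moreover have "r (Suc n) = -1" "l (Suc n) = 1"
    using Suc.prems by auto
  ultimately show ?case by simp
qed simp

lemma eventually_nonzero_at_if_nondegenerate:
  fixes f :: "real \<Rightarrow> real"
  assumes "(f has_real_derivative f' x) (at x)" "\<not> (f x = 0 \<and> f' x = 0)"
  shows "eventually (\<lambda>y. f y \<noteq> 0) (at x)"
proof (cases "f x = 0")
  case True
  have "((\<lambda>y. (f y - f x) / (y - x)) \<longlongrightarrow> f' x) (at x)"
    using assms(1) by (simp add: has_field_derivative_iff)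
  then have "eventually (\<lambda>y. (f y - f x) / (y - x) \<noteq> 0) (at x)"
    using assms(2) True by (intro tendsto_imp_eventually_ne) auto
  then show ?thesis by eventually_elim (use True in auto)
next
  case False
  have "(f \<longlongrightarrow> f x) (at x)"
    using DERIV_isCont[OF assms(1)] by (simp add: isCont_def)
  then show ?thesis using False tendsto_imp_eventually_ne by blast
qed

lemma finite_zeros_if_nondegenerate:
  fixes f :: "real \<Rightarrow> real"
  assumes "\<And>x. (f has_real_derivative f' x) (at x)" "\<And>x. \<not> (f x = 0 \<and> f' x = 0)"
    and "compact S"
  shows "finite {x \<in> S. f x = 0}"
proof (rule ccontr)
  assume "infinite {x \<in> S. f x = 0}"
  then obtain x where "x islimpt {x \<in> S. f x = 0}"
    using \<open>compact S\<close> unfolding compact_eq_Bolzano_Weierstrass by blast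
  moreover have "eventually (\<lambda>y. y \<notin> {x \<in> S. f x = 0}) (at x)"
    using eventually_nonzero_at_if_nondegenerate[OF assms(1,2)] by (rule eventually_mono) auto
  ultimately show False by (simp add: islimpt_iff_eventually)
qed

lemma filterlim_log_deriv_at_simple_zero:
  fixes f :: "real \<Rightarrow> real"
  assumes "(f has_real_derivative f' c) (at c)" "isCont f' c" "f c = 0" "f' c \<noteq> 0"
  shows "filterlim (\<lambda>x. f' x / f x) at_top (at_right c)"
    and "filterlim (\<lambda>x. f' x / f x) at_bot (at_left c)"
proof -
  define q where "q x = f x / (x - c)" for x
  have "((\<lambda>x. (f x - f c) / (x - c)) \<longlongrightarrow> f' c) (at c)"
    using assms(1) by (simp add: has_field_derivative_iff)
  then have "(q \<longlongrightarrow> f' c) (at c)"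
    using assms(3) by (simp add: q_def [abs_def])
  moreover have "(f' \<longlongrightarrow> f' c) (at c)"
    using assms(2) by (simp add: isCont_def)
  ultimately have "((\<lambda>x. f' x / q x) \<longlongrightarrow> f' c / f' c) (at c)"
    using assms(4) by (intro tendsto_divide)
  then have ratio: "((\<lambda>x. f' x / q x) \<longlongrightarrow> 1) (at c)"
    using assms(4) by simp
  have "f' x / q x * (1 / (x - c)) = f' x / f x" if "x \<noteq> c" for x
    using that by (cases "f x = 0") (simp_all add: q_def field_simps)
  then have "eventually (\<lambda>x. f' x / q x * (1 / (x - c)) = f' x / f x) (at c)"
    by (auto simp: eventually_at_filter)
  then have factor: "eventually (\<lambda>x. f' x / q x * (1 / (x - c)) = f' x / f x) (at_right c)"
    "eventually (\<lambda>x. f' x / q x * (1 / (x - c)) = f' x / f x) (at_left c)"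
    by (auto intro: filter_leD[OF at_le, rotated])
  have "filterlim (\<lambda>x. 1 / (x - c)) at_top (at_right c)" by real_asymp
  with tendsto_mono[OF at_le[OF subset_UNIV] ratio] zero_less_one
  have "filterlim (\<lambda>x. f' x / q x * (1 / (x - c))) at_top (at_right c)"
    by (rule filterlim_tendsto_pos_mult_at_top)
  then show "filterlim (\<lambda>x. f' x / f x) at_top (at_right c)"
    by (rule filterlim_cong[OF refl refl factor(1), THEN iffD1])
  have "filterlim (\<lambda>x. 1 / (x - c)) at_bot (at_left c)" by real_asymp
  with tendsto_mono[OF at_le[OF subset_UNIV] ratio] zero_less_one
  have "filterlim (\<lambda>x. f' x / q x * (1 / (x - c))) at_bot (at_left c)"
    by (rule filterlim_tendsto_pos_mult_at_bot)
  then show "filterlim (\<lambda>x. f' x / f x) at_bot (at_left c)"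
    by (rule filterlim_cong[OF refl refl factor(2), THEN iffD1])
qed

lemma fundamental_theorem_of_calculus_improper_open:
  fixes G g :: "real \<Rightarrow> real"
  assumes "c < d"
    and deriv: "\<And>x. c < x \<Longrightarrow> x < d \<Longrightarrow> (G has_real_derivative g x) (at x)"
    and left: "(G \<longlongrightarrow> L) (at_right c)" and right: "(G \<longlongrightarrow> R) (at_left d)"
  shows "has_improper_integral_open g c d (R - L)"
proof -
  have integral: "(g has_integral (G t - G s)) {s..t}" if "c < s" "s \<le> t" "t < d" for s t
    using that deriv
    by (intro fundamental_theorem_of_calculus)
       (auto simp: has_real_derivative_iff_has_vector_derivative[symmetric]
             intro: has_field_derivative_at_within)
  define m where "m = (c + d) / 2"
  have "eventually (\<lambda>s. c < s \<and> s < m) (at_right c)" "eventually (\<lambda>t. m < t \<and> t < d) (at_left d)"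
    using \<open>c < d\<close>
    by (auto simp: m_def eventually_at_right_field eventually_at_left_field intro!: exI[of _ m])
  then have "eventually (\<lambda>p. c < fst p \<and> fst p \<le> snd p \<and> snd p < d) (at_right c \<times>\<^sub>F at_left d)"
    by (rule eventually_prodI[THEN eventually_mono]) auto
  then have "eventually (\<lambda>p. G (snd p) - G (fst p) = integral {fst p..snd p} g)
      (at_right c \<times>\<^sub>F at_left d)"
    by (rule eventually_mono) (auto intro: integral_unique[symmetric] integral)
  moreover have "((\<lambda>p. G (snd p) - G (fst p)) \<longlongrightarrow> R - L) (at_right c \<times>\<^sub>F at_left d)"
    by (intro tendsto_diff filterlim_compose[OF right filterlim_snd]
        filterlim_compose[OF left filterlim_fst])
  ultimately have "((\<lambda>p. integral {fst p..snd p} g) \<longlongrightarrow> R - L) (at_right c \<times>\<^sub>F at_left d)"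
    by (rule tendsto_cong[THEN iffD1])
  then show ?thesis
    unfolding has_improper_integral_open_def using integral by blast
qed

lemma has_real_derivative_comp_log_deriv:
  fixes f f' f'' F F' :: "real \<Rightarrow> real"
  assumes "(f has_real_derivative f' x) (at x)" "(f' has_real_derivative f'' x) (at x)"
    and "(F has_real_derivative F' (f' x / f x)) (at (f' x / f x))" and "f x \<noteq> 0"
  shows "((\<lambda>y. F (f' y / f y)) has_real_derivative
           F' (f' x / f x) * deriv (\<lambda>y. f' y / f y) x) (at x)"
proof -
  have "((\<lambda>y. f' y / f y) has_real_derivative (f'' x * f x - f' x * f' x) / (f x * f x)) (at x)"
    (is "(?q has_real_derivative _) _")
    using assms(2,1,4) by (rule DERIV_divide)
  then have "(?q has_real_derivative deriv ?q x) (at x)"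
    by (simp add: DERIV_imp_deriv)
  from DERIV_chain2[OF assms(3) this] show ?thesis .
qed

lemma tendsto_comp_log_deriv_at_simple_zero:
  fixes f f' F :: "real \<Rightarrow> real"
  assumes "(f has_real_derivative f' c) (at c)" "isCont f' c" "f c = 0" "f' c \<noteq> 0"
    and F_bot: "(F \<longlongrightarrow> -1) at_bot" and F_top: "(F \<longlongrightarrow> 1) at_top"
  shows "((\<lambda>x. F (f' x / f x)) \<longlongrightarrow> 1) (at_right c)"
    and "((\<lambda>x. F (f' x / f x)) \<longlongrightarrow> -1) (at_left c)"
  using filterlim_compose[OF F_top filterlim_log_deriv_at_simple_zero(1)[OF assms(1-4)]]
    filterlim_compose[OF F_bot filterlim_log_deriv_at_simple_zero(2)[OF assms(1-4)]]
  by simp_all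

lemma has_improper_integral_open_comp_log_deriv:
  fixes f f' f'' F F' :: "real \<Rightarrow> real"
  assumes f_deriv: "\<And>x. (f has_real_derivative f' x) (at x)"
    and f'_deriv: "\<And>x. (f' has_real_derivative f'' x) (at x)"
    and nondeg: "\<And>x. \<not> (f x = 0 \<and> f' x = 0)"
    and F_deriv: "\<And>x. (F has_real_derivative F' x) (at x)"
    and F_bot: "(F \<longlongrightarrow> -1) at_bot" and F_top: "(F \<longlongrightarrow> 1) at_top"
    and "c < d" and nonzero: "\<And>x. c < x \<Longrightarrow> x < d \<Longrightarrow> f x \<noteq> 0"
  shows "has_improper_integral_open (\<lambda>x. F' (f' x / f x) * deriv (\<lambda>y. f' y / f y) x) c d
           ((if f d = 0 then -1 else F (f' d / f d)) - (if f c = 0 then 1 else F (f' c / f c)))"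
proof (rule fundamental_theorem_of_calculus_improper_open[OF \<open>c < d\<close>])
  show "((\<lambda>y. F (f' y / f y)) has_real_derivative
          F' (f' x / f x) * deriv (\<lambda>y. f' y / f y) x) (at x)" if "c < x" "x < d" for x
    using f_deriv f'_deriv F_deriv nonzero[OF that] by (rule has_real_derivative_comp_log_deriv)
  have f'_cont: "isCont f' x" for x
    using f'_deriv by (rule DERIV_isCont)
  have cont: "((\<lambda>y. F (f' y / f y)) \<longlongrightarrow> F (f' x / f x)) (at x)" if "f x \<noteq> 0" for x
  proof -
    have "isCont (\<lambda>y. f' y / f y) x"
      using that f'_cont DERIV_isCont[OF f_deriv] by (rule isCont_divide[rotated 2])
    from isCont_o2[OF this DERIV_isCont[OF F_deriv]] show ?thesis
      by (simp add: isCont_def)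
  qed
  show "((\<lambda>y. F (f' y / f y)) \<longlongrightarrow> (if f c = 0 then 1 else F (f' c / f c))) (at_right c)"
  proof (cases "f c = 0")
    case True
    with nondeg have "f' c \<noteq> 0" by blast
    with True show ?thesis
      using tendsto_comp_log_deriv_at_simple_zero(1)[OF f_deriv f'_cont _ _ F_bot F_top] by simp
  next
    case False
    with cont[OF False] show ?thesis by (simp add: filterlim_at_split)
  qed
  show "((\<lambda>y. F (f' y / f y)) \<longlongrightarrow> (if f d = 0 then -1 else F (f' d / f d))) (at_left d)"
  proof (cases "f d = 0")
    case True
    with nondeg have "f' d \<noteq> 0" by blast
    with True show ?thesis
      using tendsto_comp_log_deriv_at_simple_zero(2)[OF f_deriv f'_cont _ _ F_bot F_top] by simp
  next
    case False
    with cont[OF False] show ?thesis by (simp add: filterlim_at_split)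
  qed
qed

theorem proposition3:
  fixes f f' f'' F F' :: "real \<Rightarrow> real" and a b :: real
  assumes f_deriv: "\<And>x. (f has_real_derivative f' x) (at x)"
    and f'_deriv: "\<And>x. (f' has_real_derivative f'' x) (at x)"
    and f''_cont: "continuous_on UNIV f''"
    and nondeg: "\<And>x. \<not> (f x = 0 \<and> f' x = 0)"
    and F_deriv: "\<And>x. (F has_real_derivative F' x) (at x)"
    and F'_cont: "continuous_on UNIV F'"
    and F_bot: "(F \<longlongrightarrow> -1) at_bot"
    and F_top: "(F \<longlongrightarrow> 1) at_top"
    and ab: "a < b"
    and fab: "f a * f b \<noteq> 0"
  shows "finite {x \<in> {a..b}. f x = 0} \<and>
    (let ps = zero_partition f a b;
         g = (\<lambda>x. F' (f' x / f x) * deriv (\<lambda>y. f' y / f y) x)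
     in \<exists>I :: nat \<Rightarrow> real.
          (\<forall>i. Suc i < length ps \<longrightarrow> has_improper_integral_open g (ps ! i) (ps ! Suc i) (I i)) \<and>
          real (card {x \<in> {a..b}. f x = 0}) =
            1/2 * (F (f' b / f b) - F (f' a / f a) - (\<Sum>i < length ps - 1. I i)) \<and>
          (f' a = 0 \<and> f' b = 0 \<longrightarrow>
            real (card {x \<in> {a..b}. f x = 0}) = - 1/2 * (\<Sum>i < length ps - 1. I i)))"
proof -
  define Z where "Z = {x \<in> {a..b}. f x = 0}"
  define ps where "ps = zero_partition f a b"
  have "finite Z"
    unfolding Z_def using f_deriv nondeg compact_Icc by (rule finite_zeros_if_nondegenerate)
  have "f a \<noteq> 0" "f b \<noteq> 0" using fab by simp_all
  note partition = zero_partition_nth[OF \<open>finite Z\<close>[unfolded Z_def] ab this, folded Z_def ps_def]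
  define l where "l i = (if f (ps ! i) = 0 then 1 else F (f' (ps ! i) / f (ps ! i)))" for i
  define r where "r i = (if f (ps ! i) = 0 then -1 else F (f' (ps ! i) / f (ps ! i)))" for i
  have integrals: "has_improper_integral_open (\<lambda>x. F' (f' x / f x) * deriv (\<lambda>y. f' y / f y) x)
      (ps ! i) (ps ! Suc i) (r (Suc i) - l i)" if "Suc i < length ps" for i
  proof -
    have i: "i \<le> card Z" using that partition(1) by simp
    from partition(5)[OF i] partition(6)[OF i] show ?thesis
      unfolding r_def l_def
      by (rule has_improper_integral_open_comp_log_deriv[OF f_deriv f'_deriv nondeg F_deriv F_bot F_top])
  qed
  have "(\<Sum>i < Suc (card Z). r (Suc i) - l i) = r (Suc (card Z)) - l 0 - 2 * real (card Z)"
    using partition(4) by (intro sum_lessThan_telescope_interior_jumps) (simp add: r_def l_def)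
  also have "\<dots> = F (f' b / f b) - F (f' a / f a) - 2 * real (card Z)"
    using partition(2,3) \<open>f a \<noteq> 0\<close> \<open>f b \<noteq> 0\<close> by (simp add: r_def l_def)
  finally have "(\<Sum>i < length ps - 1. r (Suc i) - l i)
      = F (f' b / f b) - F (f' a / f a) - 2 * real (card Z)"
    using partition(1) by simp
  with \<open>finite Z\<close> integrals show ?thesis
    unfolding Let_def Z_def[symmetric] ps_def[symmetric]
    by (intro conjI exI[of _ "\<lambda>i. r (Suc i) - l i"]) auto
qed

end
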